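(* Let $a\neq0$ and let $\varepsilon$ satisfy $0<\varepsilon<\sqrt{2}$, $\varepsilon|a|<1$, $\varepsilon^{2}+4a^{2}>4$. Let $$\omega_{1,2}=\frac{1}{\sqrt{2}}\Big(2-\varepsilon^{2}\pm\varepsilon\sqrt{\varepsilon^{2}-4+4a^{2}}\Big)^{1/2},\qquad \omega_1>\omega_2>0,$$ and suppose that there is $\tau>0$ such that both $\pm i\omega_1$ and $\pm i\omega_2$ are roots of $\lambda^{2}-\varepsilon\lambda-\varepsilon a e^{-\lambda\tau}+1=0$ for this same $\tau$. Then $k\omega_1\neq l\omega_2$ for all integers $k,l$ with $1\le |k|+|l|\le 4$.
   Context: Equivalently, $\pm i\omega$ is a root of the characteristic equation for given $(\varepsilon,\tau)$ iff $\omega=a\sin(\omega\tau)$ and $1-\omega^{2}=\varepsilon a\cos(\omega\tau)$. This equation is the characteristic equation at $x=0$ of the delayed van der Pol oscillator $\ddot{x}+\varepsilon(x^{2}-1)\dot{x}+x=\varepsilon f(x(t-\tau))$ with $f(0)=f''(0)=0$, $f'(0)=a$. *)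

theory Defs
  imports Complex_Main
begin

text \<open>Characteristic function of the linearised delayed van der Pol oscillator at x = 0:
  lambda^2 - eps*lambda - eps*a*exp(-lambda*tau) + 1.\<close>
definition char_fun :: "real \<Rightarrow> real \<Rightarrow> real \<Rightarrow> complex \<Rightarrow> complex" where
  "char_fun eps a tau lam =
     lam\<^sup>2 - complex_of_real eps * lam
       - complex_of_real (eps * a) * exp (- lam * complex_of_real tau) + 1"

definition omega1 :: "real \<Rightarrow> real \<Rightarrow> real" where
  "omega1 eps a = (1 / sqrt 2) * sqrt (2 - eps\<^sup>2 + eps * sqrt (eps\<^sup>2 - 4 + 4 * a\<^sup>2))"

definition omega2 :: "real \<Rightarrow> real \<Rightarrow> real" where
  "omega2 eps a = (1 / sqrt 2) * sqrt (2 - eps\<^sup>2 - eps * sqrt (eps\<^sup>2 - 4 + 4 * a\<^sup>2))"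

end

theory Submission
  imports Defs
begin

text \<open>If \<open>\<omega>\<^sub>1 = n \<omega>\<^sub>2\<close>, writing \<open>s = \<omega>\<^sub>2\<tau>\<close>, the multiple-angle
  formulas turn \<open>n \<omega>\<^sub>2 = a sin (n s)\<close> into \<open>n \<omega>\<^sub>2 = \<omega>\<^sub>2 \<cdot> 2 cos s\<close> for \<open>n = 2\<close> and
  \<open>3 \<omega>\<^sub>2 = \<omega>\<^sub>2 (3 - 4 sin\<^sup>2 s)\<close> for \<open>n = 3\<close>; both force \<open>sin s = 0\<close>, hence \<open>\<omega>\<^sub>2 = 0\<close>.
  Since \<open>0 < \<omega>\<^sub>2 < \<omega>\<^sub>1\<close>, the ratios \<open>2\<close> and \<open>3\<close> are the only resonances with
  \<open>1 \<le> |k| + |l| \<le> 4\<close>.\<close>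

lemma char_fun_imaginary_root_iff:
  fixes eps a tau w :: real
  assumes "eps \<noteq> 0"
  shows "char_fun eps a tau (\<i> * complex_of_real w) = 0 \<longleftrightarrow>
           w = a * sin (w * tau) \<and> 1 - w\<^sup>2 = eps * a * cos (w * tau)"
proof -
  have exp_eq: "exp (- (\<i> * complex_of_real w) * complex_of_real tau)
      = complex_of_real (cos (w * tau)) - \<i> * complex_of_real (sin (w * tau))"
    by (simp add: complex_eq_iff Re_exp Im_exp)
  have Re_eq: "Re (char_fun eps a tau (\<i> * complex_of_real w))
      = 1 - w\<^sup>2 - eps * a * cos (w * tau)"
    unfolding char_fun_def exp_eq by (simp add: power2_eq_square)
  have Im_eq: "Im (char_fun eps a tau (\<i> * complex_of_real w))
      = eps * (a * sin (w * tau) - w)"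
    unfolding char_fun_def exp_eq by (simp add: power2_eq_square algebra_simps)
  show ?thesis
    using assms by (simp add: complex_eq_iff Re_eq Im_eq) (auto simp: algebra_simps)
qed

lemma sin_treble_sin: "sin (3 * x) = 3 * sin x - 4 * sin x ^ 3"
  for x :: "'a::{real_normed_field,banach}"
proof -
  have "sin (3 * x) = sin (2 * x + x)"
    by simp
  also have "\<dots> = 3 * sin x - 4 * sin x ^ 3"
    unfolding sin_add cos_double_sin sin_double
    using sin_cos_squared_add3[of x] by algebra
  finally show ?thesis .
qed

lemma sine_fixed_point_not_doubled:
  fixes a s w :: real
  assumes "w = a * sin s" and "2 * w = a * sin (2 * s)" and "w \<noteq> 0"
  shows False
proof -
  have "2 * w = 2 * w * cos s"
    using assms(1,2) by (simp add: sin_double)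
  then have "cos s = 1"
    using assms(3) by simp
  then have "sin s = 0"
    using sin_cos_squared_add[of s] by simp
  with assms(1,3) show False
    by simp
qed

lemma sine_fixed_point_not_tripled:
  fixes a s w :: real
  assumes "w = a * sin s" and "3 * w = a * sin (3 * s)" and "w \<noteq> 0"
  shows False
proof -
  have "3 * w = w * (3 - 4 * (sin s)\<^sup>2)"
    using assms(1,2) unfolding sin_treble_sin
    by (simp add: power2_eq_square power3_eq_cube algebra_simps)
  then have "sin s = 0"
    using assms(3) by simp
  with assms(1,3) show False
    by simp
qed

lemma small_integer_ratio_cases:
  fixes x y :: real and k l :: int
  assumes "0 < y" and "y < x"
    and "1 \<le> \<bar>k\<bar> + \<bar>l\<bar>" and "\<bar>k\<bar> + \<bar>l\<bar> \<le> 4"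
    and "k * x = l * y"
  shows "x = 2 * y \<or> x = 3 * y"
proof -
  have "k \<in> {-4..4}" "l \<in> {-4..4}"
    using assms(3,4) by auto
  then have "k \<in> {-4,-3,-2,-1,0,1,2,3,4}" "l \<in> {-4,-3,-2,-1,0,1,2,3,4}"
    by (auto simp: atLeastAtMost_iff)
  then show ?thesis
    using assms by auto
qed

theorem lemma2:
  fixes eps a tau :: real
  assumes "a \<noteq> 0"
    and "0 < eps" and "eps < sqrt 2"
    and "eps * \<bar>a\<bar> < 1"
    and "eps\<^sup>2 + 4 * a\<^sup>2 > 4"
    and "omega1 eps a > omega2 eps a" and "omega2 eps a > 0"
    and "tau > 0"
    and "char_fun eps a tau (\<i> * complex_of_real (omega1 eps a)) = 0"
    and "char_fun eps a tau (- \<i> * complex_of_real (omega1 eps a)) = 0"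
    and "char_fun eps a tau (\<i> * complex_of_real (omega2 eps a)) = 0"
    and "char_fun eps a tau (- \<i> * complex_of_real (omega2 eps a)) = 0"
  shows "\<forall>k l :: int. 1 \<le> \<bar>k\<bar> + \<bar>l\<bar> \<and> \<bar>k\<bar> + \<bar>l\<bar> \<le> 4 \<longrightarrow>
           real_of_int k * omega1 eps a \<noteq> real_of_int l * omega2 eps a"
proof (intro allI impI notI)
  fix k l :: int
  define w1 w2 where "w1 = omega1 eps a" and "w2 = omega2 eps a"
  assume "1 \<le> \<bar>k\<bar> + \<bar>l\<bar> \<and> \<bar>k\<bar> + \<bar>l\<bar> \<le> 4" and "k * omega1 eps a = l * omega2 eps a"
  then have "w1 = 2 * w2 \<or> w1 = 3 * w2"
    using small_integer_ratio_cases assms(6,7) unfolding w1_def w2_def by blast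
  moreover have "w1 = a * sin (w1 * tau)" "w2 = a * sin (w2 * tau)"
    using assms(2,9,11) char_fun_imaginary_root_iff unfolding w1_def w2_def by auto
  moreover have "w2 \<noteq> 0"
    using assms(7) w2_def by simp
  ultimately show False
    using sine_fixed_point_not_doubled[of w2 a "w2 * tau"]
      sine_fixed_point_not_tripled[of w2 a "w2 * tau"]
    by (auto simp: algebra_simps)
qed

end
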